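(* Let $r=r(n)<n/2$ with $r/n^{1/2}\to\infty$, and let $m=m(n)$ be integers with $2\log_2 n\le m$ and $m=o(e^{r^2/n})$. Then $\Pr(\mathcal B_m)=o(1)$ as $n\to\infty$, where $\mathcal B_m$ is the event that at least $m$ edges are chosen and $\bigcap_{j=1}^m e_j\neq\emptyset$.
   Context: Random intersecting process: Let $[n]=\{1,\dots,n\}$ and $\binom{[n]}{r}$ the family of $r$-subsets of $[n]$. Choose $e_1$ uniformly at random from $\binom{[n]}{r}$. Given $\mathcal F_i=\{e_1,\dots,e_i\}$, let $\mathcal A(\mathcal F_i)=\{e\in\binom{[n]}{r}: e\notin\mathcal F_i,\ e\cap e_j\neq\emptyset \text{ for all } 1\le j\le i\}$, and choose $e_{i+1}$ uniformly at random from $\mathcal A(\mathcal F_i)$. The process halts when $\mathcal A(\mathcal F_i)=\emptyset$. *)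

theory Defs
  imports "HOL-Probability.Probability" "HOL-Library.Landau_Symbols"
begin

definition admissible :: "nat \<Rightarrow> nat \<Rightarrow> nat set list \<Rightarrow> nat set set" where
  "admissible n r F = {e. e \<subseteq> {1..n} \<and> card e = r \<and> e \<notin> set F \<and> (\<forall>f\<in>set F. e \<inter> f \<noteq> {})}"

text \<open>Distribution of the list of the first k edges of the random intersecting process
  (shorter than k if the process halted before step k).\<close>
fun intersecting_process :: "nat \<Rightarrow> nat \<Rightarrow> nat \<Rightarrow> nat set list pmf" where
  "intersecting_process n r 0 = return_pmf []"
| "intersecting_process n r (Suc k) =
     bind_pmf (intersecting_process n r k)
       (\<lambda>F. if admissible n r F = {} then return_pmf F
            else map_pmf (\<lambda>e. F @ [e]) (pmf_of_set (admissible n r F)))"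

definition prob_B :: "nat \<Rightarrow> nat \<Rightarrow> nat \<Rightarrow> real" where
  "prob_B n r m = measure_pmf.prob (intersecting_process n r m)
      {F. length F = m \<and> (\<Inter>e\<in>set F. e) \<noteq> {}}"

end

theory Submission
  imports Defs
begin

text \<open>
  If the first \<open>m\<close> edges share a point \<open>x\<close>, every one of them was drawn through \<open>x\<close>.
  Suppose the edges chosen so far all contain \<open>x\<close> and are so few that \<open>k C(n-r,r) \<le> C(n-1,r)/2\<close>.
  Each of them is disjoint from only \<open>C(n-r,r)\<close> of the \<open>C(n-1,r)\<close> \<open>r\<close>-sets avoiding \<open>x\<close>,
  so at least \<open>C(n-1,r)/2\<close> admissible sets avoid \<open>x\<close>, while at most
  \<open>C(n-1,r-1) \<le> C(n-1,r)\<close> contain it: the next edge passes through \<open>x\<close> with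
  probability at most \<open>2/3\<close>. A union bound over \<open>x\<close> gives \<open>Pr(B_m) \<le> n (2/3)^(m-1)\<close>,
  which is \<open>O(n^(1 + 2 log_2(2/3)))\<close> for \<open>m \<ge> 2 log_2 n\<close>, and \<open>1 + 2 log_2(2/3) < 0\<close>.
  The counting condition holds eventually since \<open>C(n-r,r) \<le> 2 exp(-r^2/n) C(n-1,r)\<close>
  and \<open>m = o(exp(r^2/n))\<close>.
\<close>

lemma card_subsets_containing:
  assumes "finite U" and "x \<in> U" and "1 \<le> r"
  shows "card {e. e \<subseteq> U \<and> card e = r \<and> x \<in> e} = (card U - 1) choose (r - 1)"
proof -
  let ?all = "{e. e \<subseteq> U \<and> card e = r}"
  let ?avoid = "{e. e \<subseteq> U - {x} \<and> card e = r}"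
  have split: "{e. e \<subseteq> U \<and> card e = r \<and> x \<in> e} = ?all - ?avoid" by auto
  have "?avoid \<subseteq> ?all" by auto
  moreover have "card ?all = card U choose r" and "card ?avoid = (card U - 1) choose r"
    using n_subsets[of U r] n_subsets[of "U - {x}" r] assms by auto
  moreover have "card U choose r = ((card U - 1) choose (r - 1)) + ((card U - 1) choose r)"
    using binomial_Suc_Suc[of "card U - 1" "r - 1"] assms card_gt_0_iff[of U] by fastforce
  ultimately show ?thesis
    unfolding split using assms(1) by (simp add: card_Diff_subset finite_subset)
qed

lemma card_subsets_disjoint:
  assumes "finite U" and "f \<subseteq> U"
  shows "card {e. e \<subseteq> U \<and> card e = r \<and> e \<inter> f = {}} = (card U - card f) choose r"
proof -
  have "{e. e \<subseteq> U \<and> card e = r \<and> e \<inter> f = {}} = {e. e \<subseteq> U - f \<and> card e = r}" by auto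
  then show ?thesis
    using n_subsets[of "U - f" r] assms by (simp add: card_Diff_subset finite_subset)
qed

lemma finite_admissible: "finite (admissible n r F)"
  unfolding admissible_def by (rule finite_subset[of _ "Pow {1..n}"]) auto

lemma card_admissible_through_le:
  assumes "x \<in> {1..n}" and "1 \<le> r" and "2 * r < n"
  shows "card (admissible n r F \<inter> {e. x \<in> e}) \<le> (n - 1) choose r"
proof -
  have "card (admissible n r F \<inter> {e. x \<in> e}) \<le> card {e. e \<subseteq> {1..n} \<and> card e = r \<and> x \<in> e}"
    by (rule card_mono) (auto simp: admissible_def)
  also have "\<dots> = (n - 1) choose (r - 1)"
    using card_subsets_containing[of "{1..n}" x r] assms by simp
  also have "\<dots> \<le> (n - 1) choose r"
  proof -
    have "r - 1 < (n - 1) div 2" using assms by linarith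
    from less_imp_le[OF binomial_less_binomial_Suc[OF this]] show ?thesis
      using assms(2) by simp
  qed
  finally show ?thesis .
qed

lemma card_admissible_avoiding_ge:
  assumes "x \<in> {1..n}" and edges: "\<forall>f\<in>set F. f \<subseteq> {1..n} \<and> card f = r \<and> x \<in> f"
  shows "real ((n - 1) choose r) - real (length F) * real ((n - r) choose r)
           \<le> real (card (admissible n r F - {e. x \<in> e}))"
proof -
  let ?U = "{1..n} - {x}"
  let ?D = "\<lambda>f. {e. e \<subseteq> {1..n} \<and> card e = r \<and> e \<inter> f = {}}"
  let ?S = "{e. e \<subseteq> ?U \<and> card e = r}"
  have "card (\<Union>f\<in>set F. ?D f) \<le> (\<Sum>f\<in>set F. card (?D f))" by (rule card_UN_le) simp
  also have "\<dots> = card (set F) * ((n - r) choose r)"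
    using edges card_subsets_disjoint[of "{1..n}"] by simp
  also have "\<dots> \<le> length F * ((n - r) choose r)" by (simp add: card_length)
  finally have "card (\<Union>f\<in>set F. ?D f) \<le> length F * ((n - r) choose r)" .
  moreover have "card ?S = (n - 1) choose r"
    using n_subsets[of ?U r] assms(1) by simp
  ultimately have "((n - 1) choose r) - length F * ((n - r) choose r)
                    \<le> card ?S - card (\<Union>f\<in>set F. ?D f)"
    using diff_le_mono2 by simp
  also have "\<dots> \<le> card (?S - (\<Union>f\<in>set F. ?D f))"
    by (rule diff_card_le_card_Diff) auto
  also have "\<dots> \<le> card (admissible n r F - {e. x \<in> e})"
    using edges by (intro card_mono) (auto simp: finite_admissible admissible_def)
  finally have "(n - 1) choose r
                  \<le> card (admissible n r F - {e. x \<in> e}) + length F * ((n - r) choose r)"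
    by arith
  then have "real ((n - 1) choose r)
              \<le> real (card (admissible n r F - {e. x \<in> e}) + length F * ((n - r) choose r))"
    by (rule of_nat_mono)
  then show ?thesis by simp
qed

lemma admissible_through_ratio_le:
  assumes x: "x \<in> {1..n}" and "1 \<le> r" and "2 * r < n"
    and edges: "\<forall>f\<in>set F. f \<subseteq> {1..n} \<and> card f = r \<and> x \<in> f"
    and few: "real (length F) * real ((n - r) choose r) \<le> real ((n - 1) choose r) / 2"
    and ne: "admissible n r F \<noteq> {}"
  shows "real (card (admissible n r F \<inter> {e. x \<in> e})) / real (card (admissible n r F)) \<le> 2 / 3"
proof -
  let ?A = "admissible n r F" and ?X = "{e. x \<in> e}"
  have "card ?A = card (?A \<inter> ?X) + card (?A - ?X)"
    by (rule card_Int_Diff[OF finite_admissible])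
  moreover have "card (?A \<inter> ?X) \<le> (n - 1) choose r"
    using card_admissible_through_le assms by blast
  moreover have "real ((n - 1) choose r) / 2 \<le> real (card (?A - ?X))"
    using card_admissible_avoiding_ge[OF x edges] few by linarith
  moreover have "card ?A > 0" using ne finite_admissible by (simp add: card_gt_0_iff)
  ultimately show ?thesis by (simp add: divide_simps)
qed

lemma measure_bind_pmf_le:
  fixes c :: real
  assumes "0 \<le> c" and "\<And>x. x \<in> set_pmf p \<Longrightarrow> measure_pmf.prob (f x) A \<le> c * indicator B x"
  shows "measure_pmf.prob (bind_pmf p f) A \<le> c * measure_pmf.prob p B"
proof -
  have "emeasure (bind_pmf p f) A = (\<integral>\<^sup>+x. emeasure (f x) A \<partial>p)"
    by (rule emeasure_bind_pmf)
  also have "\<dots> \<le> (\<integral>\<^sup>+x. ennreal c * indicator B x \<partial>p)"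
  proof (intro nn_integral_mono_AE AE_pmfI)
    fix x assume "x \<in> set_pmf p"
    then have "measure_pmf.prob (f x) A \<le> c * indicator B x" by (rule assms(2))
    then show "emeasure (f x) A \<le> ennreal c * indicator B x"
      using measure_nonneg[of "f x" A]
      by (cases "x \<in> B") (auto simp: measure_pmf.emeasure_eq_measure ennreal_leI)
  qed
  also have "\<dots> = ennreal (c * measure_pmf.prob p B)"
    using assms(1) by (simp add: nn_integral_cmult_indicator measure_pmf.emeasure_eq_measure ennreal_mult)
  finally show ?thesis
    using assms(1) by (simp add: measure_pmf.emeasure_eq_measure)
qed

definition process_step :: "nat \<Rightarrow> nat \<Rightarrow> nat set list \<Rightarrow> nat set list pmf" where
  "process_step n r F = (if admissible n r F = {} then return_pmf F
     else map_pmf (\<lambda>e. F @ [e]) (pmf_of_set (admissible n r F)))"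

lemma intersecting_process_Suc:
  "intersecting_process n r (Suc k) = bind_pmf (intersecting_process n r k) (process_step n r)"
  by (simp add: process_step_def[abs_def])

lemma set_pmf_intersecting_process:
  assumes "F \<in> set_pmf (intersecting_process n r k)"
  shows "length F \<le> k" and "\<forall>e\<in>set F. e \<subseteq> {1..n} \<and> card e = r"
proof -
  have "length F \<le> k \<and> (\<forall>e\<in>set F. e \<subseteq> {1..n} \<and> card e = r)"
    using assms
  proof (induction k arbitrary: F)
    case 0
    then show ?case by simp
  next
    case (Suc k)
    obtain G where G: "G \<in> set_pmf (intersecting_process n r k)" "F \<in> set_pmf (process_step n r G)"
      using Suc.prems unfolding intersecting_process_Suc by auto
    then consider "F = G" | e where "F = G @ [e]" "e \<in> admissible n r G"
      by (auto simp: process_step_def finite_admissible split: if_splits)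
    then show ?case
      using Suc.IH[OF G(1)] by cases (auto simp: admissible_def)
  qed
  then show "length F \<le> k" and "\<forall>e\<in>set F. e \<subseteq> {1..n} \<and> card e = r" by auto
qed

definition star_lists :: "nat \<Rightarrow> nat \<Rightarrow> nat set list set" where
  "star_lists x k = {F. length F = k \<and> (\<forall>e\<in>set F. x \<in> e)}"

lemma prob_process_step_star_lists_le:
  assumes x: "x \<in> {1..n}" and r: "1 \<le> r" "2 * r < n"
    and F: "F \<in> set_pmf (intersecting_process n r k)"
    and few: "real k * real ((n - r) choose r) \<le> real ((n - 1) choose r) / 2"
  shows "measure_pmf.prob (process_step n r F) (star_lists x (Suc k))
           \<le> 2 / 3 * indicator (star_lists x k) F"
proof (cases "F \<in> star_lists x k \<and> admissible n r F \<noteq> {}")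
  case True
  then have "(\<lambda>e. F @ [e]) -` star_lists x (Suc k) = {e. x \<in> e}"
    by (auto simp: star_lists_def)
  then have "measure_pmf.prob (process_step n r F) (star_lists x (Suc k))
      = real (card (admissible n r F \<inter> {e. x \<in> e})) / real (card (admissible n r F))"
    using True by (simp add: process_step_def measure_pmf_of_set finite_admissible)
  also have "\<dots> \<le> 2 / 3"
    using True set_pmf_intersecting_process[OF F] few
    by (intro admissible_through_ratio_le[OF x r]) (auto simp: star_lists_def)
  finally show ?thesis using True by simp
next
  case False
  have "set_pmf (process_step n r F) \<inter> star_lists x (Suc k) = {}"
    using False set_pmf_intersecting_process(1)[OF F]
    by (auto simp: process_step_def star_lists_def finite_admissible split: if_splits)
  then have "measure_pmf.prob (process_step n r F) (star_lists x (Suc k)) = 0"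
    by (simp add: measure_pmf_zero_iff)
  then show ?thesis by simp
qed

lemma prob_star_lists_le:
  assumes x: "x \<in> {1..n}" and r: "1 \<le> r" "2 * r < n"
    and few: "real m * real ((n - r) choose r) \<le> real ((n - 1) choose r) / 2"
    and k: "1 \<le> k" "k \<le> m"
  shows "measure_pmf.prob (intersecting_process n r k) (star_lists x k) \<le> (2 / 3) ^ (k - 1)"
  using k
proof (induction k rule: nat_induct_at_least)
  case base
  then show ?case by simp
next
  case (Suc k)
  have "real k * real ((n - r) choose r) \<le> real m * real ((n - r) choose r)"
    using Suc.prems by (intro mult_right_mono) auto
  then have "measure_pmf.prob (intersecting_process n r (Suc k)) (star_lists x (Suc k))
      \<le> 2 / 3 * measure_pmf.prob (intersecting_process n r k) (star_lists x k)"
    unfolding intersecting_process_Suc using few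
    by (intro measure_bind_pmf_le prob_process_step_star_lists_le[OF x r]) auto
  also have "\<dots> \<le> 2 / 3 * (2 / 3) ^ (k - 1)"
    using Suc by simp
  also have "\<dots> = (2 / 3) ^ (Suc k - 1)"
    using Suc.hyps by (cases k) auto
  finally show ?case .
qed

lemma prob_B_le_star_lists:
  assumes "1 \<le> m"
  shows "prob_B n r m \<le> (\<Sum>x\<in>{1..n}. measure_pmf.prob (intersecting_process n r m) (star_lists x m))"
proof -
  let ?P = "intersecting_process n r m"
  let ?B = "{F. length F = m \<and> (\<Inter>e\<in>set F. e) \<noteq> {}}"
  have "?B \<inter> set_pmf ?P \<subseteq> (\<Union>x\<in>{1..n}. star_lists x m)"
  proof
    fix F assume F: "F \<in> ?B \<inter> set_pmf ?P"
    then obtain x where x: "x \<in> (\<Inter>e\<in>set F. e)" by blast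
    have "F \<noteq> []" using F assms by auto
    then obtain e where e: "e \<in> set F" by (cases F) auto
    have "e \<subseteq> {1..n}" using set_pmf_intersecting_process(2)[of F n r m] F e by blast
    then have "x \<in> {1..n}" using x e by blast
    moreover have "F \<in> star_lists x m" using F x by (simp add: star_lists_def)
    ultimately show "F \<in> (\<Union>x\<in>{1..n}. star_lists x m)" by blast
  qed
  then have "measure_pmf.prob ?P (?B \<inter> set_pmf ?P) \<le> measure_pmf.prob ?P (\<Union>x\<in>{1..n}. star_lists x m)"
    by (rule measure_pmf.finite_measure_mono) simp
  also have "\<dots> \<le> (\<Sum>x\<in>{1..n}. measure_pmf.prob ?P (star_lists x m))"
    by (rule measure_pmf.finite_measure_subadditive_finite) auto
  finally show ?thesis
    by (simp add: prob_B_def measure_Int_set_pmf)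
qed

lemma prob_B_le:
  assumes "1 \<le> r" "2 * r < n" "1 \<le> m"
    and "real m * real ((n - r) choose r) \<le> real ((n - 1) choose r) / 2"
  shows "prob_B n r m \<le> real n * (2 / 3) ^ (m - 1)"
proof -
  have "prob_B n r m \<le> (\<Sum>x\<in>{1..n}. (2 / 3 :: real) ^ (m - 1))"
    using prob_star_lists_le[OF _ assms(1,2,4,3) order.refl]
    by (intro order.trans[OF prob_B_le_star_lists[OF assms(3)]] sum_mono)
  then show ?thesis by simp
qed

lemma binomial_shift_le:
  fixes n r :: nat
  assumes "1 \<le> r" and "2 * r < n"
  shows "real ((n - r) choose r) \<le> (1 - (real r - 1) / real n) ^ r * real ((n - 1) choose r)"
proof -
  define q where "q = 1 - (real r - 1) / real n"
  \<comment> \<open>\<open>(n-r-i)/(n-1-i) = 1 - (r-1)/(n-1-i) \<le> q\<close>, factor by factor in the falling factorials\<close>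
  have factor: "0 \<le> real (n - r) - real i \<and> real (n - r) - real i \<le> q * (real (n - 1) - real i)"
    if "i < r" for i
  proof -
    have "0 \<le> real n - 1 - real i" "real n - 1 - real i \<le> real n" using that assms by linarith+
    then have "(real r - 1) * (real n - 1 - real i) / real n \<le> real r - 1"
      using assms by (simp add: divide_simps mult_left_mono)
    then show ?thesis
      using that assms by (simp add: q_def algebra_simps)
  qed
  have "fact r * real ((n - r) choose r) = (\<Prod>i = 0..<r. real (n - r) - real i)"
    by (simp add: binomial_gbinomial gbinomial_mult_fact)
  also have "\<dots> \<le> (\<Prod>i = 0..<r. q * (real (n - 1) - real i))"
    using factor by (intro prod_mono) auto
  also have "\<dots> = q ^ r * (fact r * real ((n - 1) choose r))"
    by (simp add: prod.distrib binomial_gbinomial gbinomial_mult_fact)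
  finally show ?thesis
    by (simp add: q_def mult.left_commute)
qed

lemma one_minus_power_le_exp:
  fixes n r :: nat
  assumes "1 \<le> r" and "2 * r < n"
  shows "(1 - (real r - 1) / real n) ^ r \<le> 2 * exp (- (real r)\<^sup>2 / real n)"
proof -
  define t where "t = (real r - 1) / real n"
  have n: "real n > 0" using assms by simp
  have "0 \<le> 1 - t" using assms by (simp add: t_def divide_simps)
  moreover have "1 - t \<le> exp (- t)" using exp_ge_add_one_self[of "- t"] by simp
  ultimately have "(1 - t) ^ r \<le> exp (- t) ^ r" by (simp add: power_mono)
  also have "\<dots> = exp (- (real r)\<^sup>2 / real n) * exp (real r / real n)"
    using n by (simp add: t_def exp_of_nat_mult[symmetric] exp_add[symmetric] field_simps power2_eq_square)
  also have "\<dots> \<le> exp (- (real r)\<^sup>2 / real n) * 2"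
  proof -
    have "real r / real n \<le> 1 / 2" using assms n by (simp add: divide_simps)
    then have "exp (real r / real n) \<le> 2" using exp_half_le2 by (meson exp_le_cancel_iff order.trans)
    then show ?thesis by simp
  qed
  finally show ?thesis by (simp add: t_def)
qed

lemma log_two_thirds_lt: "2 * log 2 (2 / 3 :: real) < - 1"
proof -
  have "2 * log 2 (2 / 3 :: real) = log 2 (4 / 9)"
    using log_nat_power[of "2 / 3 :: real" 2 2] by (simp add: power_divide)
  also have "\<dots> < log 2 (1 / 2)" by simp
  also have "\<dots> = - 1" by (simp add: log_divide)
  finally show ?thesis .
qed

lemma two_thirds_power_le_powr:
  fixes n m :: nat
  assumes "2 \<le> n" and "2 * log 2 (real n) \<le> real m"
  shows "real n * (2 / 3) ^ (m - 1) \<le> 3 / 2 * real n powr (1 + 2 * log 2 (2 / 3))"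
proof -
  have "1 \<le> log 2 (real n)" using assms(1) by simp
  then have "1 \<le> m" using assms(2) by linarith
  then have "(2 / 3 :: real) ^ (m - 1) = 3 / 2 * (2 / 3) ^ m"
    by (cases m) simp_all
  also have "(2 / 3 :: real) ^ m = (2 / 3) powr real m"
    by (simp add: powr_realpow)
  also have "(2 / 3 :: real) powr real m \<le> (2 / 3) powr (2 * log 2 (real n))"
    using assms(2) by (intro powr_mono') auto
  also have "\<dots> = real n powr (2 * log 2 (2 / 3))"
    using assms(1) by (simp add: powr_def log_def)
  finally have "real n * (2 / 3) ^ (m - 1) \<le> real n * (3 / 2 * real n powr (2 * log 2 (2 / 3)))"
    by (intro mult_left_mono) auto
  also have "\<dots> = 3 / 2 * real n powr (1 + 2 * log 2 (2 / 3))"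
    using assms(1) by (simp add: powr_add)
  finally show ?thesis .
qed

lemma prob_B_le_powr:
  fixes n r m :: nat
  assumes r: "1 \<le> r" "2 * r < n" and n: "2 \<le> n"
    and m: "2 * log 2 (real n) \<le> real m" "4 * real m \<le> exp ((real r)\<^sup>2 / real n)"
  shows "prob_B n r m \<le> 3 / 2 * real n powr (1 + 2 * log 2 (2 / 3))"
proof -
  have "1 \<le> log 2 (real n)" using n by simp
  then have "1 \<le> m" using m(1) by linarith
  have "real m * real ((n - r) choose r)
      \<le> exp ((real r)\<^sup>2 / real n) / 4 * (2 * exp (- (real r)\<^sup>2 / real n) * real ((n - 1) choose r))"
    using m(2) order.trans[OF binomial_shift_le[OF r] mult_right_mono[OF one_minus_power_le_exp[OF r]]]
    by (intro mult_mono) auto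
  also have "\<dots> = real ((n - 1) choose r) / 2"
    by (simp add: exp_minus field_simps)
  finally have "prob_B n r m \<le> real n * (2 / 3) ^ (m - 1)"
    using prob_B_le[OF r \<open>1 \<le> m\<close>] by blast
  also have "\<dots> \<le> 3 / 2 * real n powr (1 + 2 * log 2 (2 / 3))"
    by (rule two_thirds_power_le_powr[OF n m(1)])
  finally show ?thesis .
qed

lemma powr_decay_tendsto_zero:
  "(\<lambda>n. 3 / 2 * real n powr (1 + 2 * log 2 (2 / 3))) \<longlonglongrightarrow> 0"
  using log_two_thirds_lt
  by (intro tendsto_mult_right_zero tendsto_neg_powr filterlim_real_sequentially) simp

theorem lemma8:
  fixes r m :: "nat \<Rightarrow> nat"
  assumes "\<forall>\<^sub>F n in sequentially. real (r n) < real n / 2"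
    and "filterlim (\<lambda>n. real (r n) / sqrt (real n)) at_top sequentially"
    and "\<forall>\<^sub>F n in sequentially. 2 * log 2 (real n) \<le> real (m n)"
    and "(\<lambda>n. real (m n)) \<in> o(\<lambda>n. exp ((real (r n))\<^sup>2 / real n))"
  shows "(\<lambda>n. prob_B n (r n) (m n)) \<longlonglongrightarrow> 0"
proof (rule tendsto_sandwich[OF _ _ tendsto_const powr_decay_tendsto_zero])
  \<comment> \<open>the growth of \<open>r/\<surd>n\<close> is only needed for \<open>r \<ge> 1\<close>; the hypothesis on \<open>m\<close> carries the rest\<close>
  have "\<forall>\<^sub>F n in sequentially. 1 \<le> real (r n) / sqrt (real n)"
    using assms(2) by (simp add: filterlim_at_top)
  moreover have "\<forall>\<^sub>F n in sequentially. real (m n) \<le> 1 / 4 * exp ((real (r n))\<^sup>2 / real n)"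
    using landau_o.smallD[OF assms(4), of "1 / 4"] by simp
  ultimately show "\<forall>\<^sub>F n in sequentially.
      prob_B n (r n) (m n) \<le> 3 / 2 * real n powr (1 + 2 * log 2 (2 / 3))"
    using assms(1,3) eventually_ge_at_top[of 2]
  proof eventually_elim
    case (elim n)
    then have "sqrt (real n) \<le> real (r n)" by (simp add: divide_simps)
    moreover have "0 < sqrt (real n)" using elim by simp
    ultimately have "1 \<le> r n" by (cases "r n") auto
    then show ?case
      using elim by (intro prob_B_le_powr) auto
  qed
qed (simp add: prob_B_def)

end
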